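(* Let $X$ and $Y$ be metric spaces with $X$ complete, and let $Y'\subset Y$ be a subset. Let $f\colon X\to Y$ be continuous and set $X':=f^{-1}(Y')$. Assume that the restriction $f|_{X'}\colon X'\to Y'$ is open and surjective (with $X'$, $Y'$ carrying the induced metrics). Then there exists a subset $X_0\subset X'$ which is relatively closed in $X'$, such that $f|_{X_0}\colon X_0\to Y'$ is surjective and $\mathrm{dens}(X_0)=\mathrm{dens}(Y')$.
   Context: For a metric space $W$, $\mathrm{dens}(W)$ denotes the smallest cardinality of a dense subset of $W$. A map is open if it maps open sets of its domain to open sets of its target. *)

theory Defs
  imports "HOL-Analysis.Analysis"
begin

definition dense_subset :: "'a::topological_space set \<Rightarrow> 'a set \<Rightarrow> bool" where
  "dense_subset D S \<longleftrightarrow> D \<subseteq> S \<and> S \<subseteq> closure D"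

definition dens :: "'a::topological_space set \<Rightarrow> 'a rel" where
  "dens S = card_of (SOME D. dense_subset D S \<and>
      (\<forall>E. dense_subset E S \<longrightarrow> (card_of D, card_of E) \<in> ordLeq))"

end

theory Submission
  imports Defs
begin

text \<open>
  Continuous images of dense sets are dense, so every \<open>X0\<close> mapped onto \<open>Y'\<close> has
  \<open>dens Y' \<le> dens X0\<close>. For the converse fix a dense \<open>D \<subseteq> Y'\<close> of size \<open>dens Y'\<close>;
  if \<open>D\<close> is finite then \<open>Y' = D\<close> and a finite section of \<open>f\<close> will do. Otherwise
  call the sets \<open>ball d (1/(m+1)) \<inter> Y'\<close> with \<open>d \<in> D\<close> basic; openness of \<open>f\<close> on
  \<open>X'\<close> says that for every \<open>x \<in> X'\<close> and every radius \<open>r\<close> some basic set around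
  \<open>f x\<close> is covered by \<open>f (ball x r \<inter> X')\<close>. Closing a subset \<open>S\<subseteq>X'\<close> under choosing
  witnesses for the \<open>|D|\<close> many combinations of a dyadic radius and a basic set keeps
  \<open>|S| \<le> |D|\<close>, and lets one zigzag, for each \<open>y \<in> Y'\<close>, between points \<open>a\<^sub>k\<close> of
  \<open>S\<close> and points \<open>x\<^sub>k\<close> of the fibre over \<open>y\<close> with \<open>dist a\<^sub>k x\<^sub>k < 2\<^sup>-\<^sup>k\<close> and
  \<open>dist a\<^sub>k a\<^sub>k\<^sub>+\<^sub>1 < 2\<^sup>-\<^sup>k\<close>. By completeness the \<open>a\<^sub>k\<close> converge to a point of
  \<open>closure S\<close> lying in the closed fibre, so \<open>X0 = closure S \<inter> X'\<close> works.
\<close>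

unbundle cardinal_syntax

lemma dens_minimal:
  fixes S :: "'a::topological_space set"
  shows "\<exists>D. dense_subset D S \<and> (\<forall>E. dense_subset E S \<longrightarrow> |D| \<le>o |E| )"
proof -
  let ?R = "{ |E| | E. dense_subset E S}"
  have "dense_subset S S" by (simp add: dense_subset_def closure_subset)
  then have "?R \<noteq> {}" by blast
  moreover have "\<forall>r\<in>?R. Well_order r" using card_of_Well_order by blast
  ultimately obtain r where "r \<in> ?R" "\<forall>r'\<in>?R. r \<le>o r'"
    using exists_minim_Well_order[of ?R] by blast
  then show ?thesis by blast
qed

lemma dens_le_card_of_dense:
  fixes S :: "'a::topological_space set"
  assumes "dense_subset E S"
  shows "dens S \<le>o |E|"
  using someI_ex[OF dens_minimal[of S]] assms unfolding dens_def by blast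

lemma dens_attained:
  fixes S :: "'a::topological_space set"
  obtains D where "dense_subset D S" "( |D|, dens S) \<in> ordIso"
  using someI_ex[OF dens_minimal[of S]] card_of_refl unfolding dens_def by blast

lemma dens_closure_Int_le:
  fixes A :: "'a::topological_space set"
  assumes "A \<subseteq> T"
  shows "dens (closure A \<inter> T) \<le>o |A|"
  by (rule dens_le_card_of_dense) (use assms closure_subset in \<open>auto simp: dense_subset_def\<close>)

lemma continuous_image_dense_subset:
  assumes "continuous_on S f" "dense_subset D S"
  shows "dense_subset (f ` D) (f ` S)"
proof -
  have "D \<subseteq> S" "S \<subseteq> closure D" using assms(2) by (auto simp: dense_subset_def)
  have "closedin (top_of_set S) (S \<inter> f -` closure (f ` D))"
    using assms(1) by (rule continuous_closedin_preimage) simp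
  then obtain C where "closed C" "S \<inter> f -` closure (f ` D) = S \<inter> C"
    by (auto simp: closedin_closed)
  moreover have "D \<subseteq> S \<inter> f -` closure (f ` D)"
    using \<open>D \<subseteq> S\<close> closure_subset by fastforce
  ultimately have "closure D \<subseteq> C"
    by (metis closure_minimal le_infE)
  then have "f ` S \<subseteq> closure (f ` D)"
    using \<open>S \<subseteq> closure D\<close> \<open>S \<inter> f -` closure (f ` D) = S \<inter> C\<close> by blast
  then show ?thesis using \<open>D \<subseteq> S\<close> by (auto simp: dense_subset_def)
qed

lemma dens_continuous_image_le:
  assumes "continuous_on S f"
  shows "dens (f ` S) \<le>o dens S"
proof -
  obtain D where D: "dense_subset D S" "( |D|, dens S) \<in> ordIso" by (rule dens_attained)
  have "dens (f ` S) \<le>o |f ` D|"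
    by (rule dens_le_card_of_dense, rule continuous_image_dense_subset) (fact assms D(1))+
  also have "|f ` D| \<le>o |D|" by (rule card_of_image)
  also have "|D| \<le>o dens S" using D(2) ordIso_iff_ordLeq by blast
  finally show ?thesis .
qed

lemma dense_subset_ball_basis:
  fixes D Y :: "'a::metric_space set"
  assumes "dense_subset D Y" "openin (top_of_set Y) V" "y \<in> V"
  obtains d m where "d \<in> D" "dist d y < 1 / Suc m" "ball d (1 / Suc m) \<inter> Y \<subseteq> V"
proof -
  obtain \<rho> where "\<rho> > 0" and \<rho>: "ball y \<rho> \<inter> Y \<subseteq> V"
    using assms(2,3) by (auto simp: openin_contains_ball)
  obtain m :: nat where m: "1 / Suc m < \<rho> / 2"
    using reals_Archimedean[of "\<rho> / 2"] \<open>\<rho> > 0\<close> by (auto simp: inverse_eq_divide)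
  have "y \<in> closure D"
    using assms by (meson dense_subset_def openin_imp_subset subsetD)
  then obtain d where "d \<in> D" "dist d y < 1 / Suc m"
    using closure_approachable[THEN iffD1, rule_format, of y D "1 / Suc m"] by auto
  moreover have "ball d (1 / Suc m) \<subseteq> ball y \<rho>"
  proof
    fix z assume "z \<in> ball d (1 / Suc m)"
    moreover have "dist y z \<le> dist d y + dist d z"
      using dist_triangle[of y z d] by (simp add: dist_commute)
    ultimately show "z \<in> ball y \<rho>"
      using \<open>dist d y < 1 / Suc m\<close> m by simp
  qed
  ultimately show thesis using that \<rho> by blast
qed

lemma Cauchy_if_dist_Suc_less_half_power:
  fixes a :: "nat \<Rightarrow> 'a::metric_space"
  assumes "\<And>n. dist (a n) (a (Suc n)) < (1/2) ^ n"
  shows "Cauchy a"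
proof -
  have telescope: "dist (a m) (a (m + k)) \<le> 2 * (1/2) ^ m - 2 * (1/2) ^ (m + k)" for m k
  proof (induction k)
    case (Suc k)
    have "dist (a m) (a (m + Suc k)) \<le> dist (a m) (a (m + k)) + dist (a (m + k)) (a (Suc (m + k)))"
      by (simp add: dist_triangle)
    also have "\<dots> \<le> 2 * (1/2) ^ m - 2 * (1/2) ^ (m + k) + (1/2) ^ (m + k)"
      using Suc.IH assms[of "m + k"] by linarith
    also have "\<dots> = 2 * (1/2) ^ m - 2 * (1/2) ^ (m + Suc k)"
      by simp
    finally show ?case .
  qed simp
  have bound: "dist (a m) (a (m + k)) \<le> 2 * (1/2) ^ m" for m k
    using telescope[of m k] zero_le_power[of "1/2::real" "m + k"] by linarith
  show ?thesis
  proof (rule Cauchy_altdef2[THEN iffD2], intro allI impI)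
    fix e :: real assume "e > 0"
    then obtain N where N: "(1/2::real) ^ N < e / 2"
      using real_arch_pow_inv[of "e / 2" "1/2"] by auto
    have "dist (a n) (a N) < e" if "n \<ge> N" for n
      using bound[of N "n - N"] that N by (simp add: dist_commute)
    then show "\<exists>N. \<forall>n\<ge>N. dist (a n) (a N) < e" by blast
  qed
qed

lemma open_map_image_ball_contains_basic_ball:
  fixes f :: "'a::metric_space \<Rightarrow> 'b::metric_space"
  assumes "\<forall>U. openin (top_of_set X) U \<longrightarrow> openin (top_of_set Y) (f ` U)"
    and "dense_subset D Y" "x \<in> X" "r > 0"
  obtains d m where "d \<in> D" "dist d (f x) < 1 / Suc m"
    "ball d (1 / Suc m) \<inter> Y \<subseteq> f ` (ball x r \<inter> X)"
proof -
  have "openin (top_of_set X) (X \<inter> ball x r)" by (rule openin_open_Int) simp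
  then have "openin (top_of_set Y) (f ` (ball x r \<inter> X))"
    using assms(1) by (simp add: Int_commute)
  moreover have "f x \<in> f ` (ball x r \<inter> X)" using assms(3,4) by simp
  ultimately show thesis using dense_subset_ball_basis[OF assms(2)] that by blast
qed

lemma closure_meets_closed_if_approximable:
  fixes S F :: "'a::complete_space set"
  assumes "closed F"
    and start: "\<exists>a\<in>S. \<exists>x\<in>F. dist a x < 1"
    and step: "\<And>k a x. a \<in> S \<Longrightarrow> x \<in> F \<Longrightarrow> dist a x < (1/2) ^ k \<Longrightarrow>
                 \<exists>a'\<in>S. \<exists>x'\<in>F. dist a' x' < (1/2) ^ Suc k \<and> dist a a' < (1/2) ^ k"
  shows "closure S \<inter> F \<noteq> {}"
proof -
  define Q where "Q k p \<longleftrightarrow> fst p \<in> S \<and> snd p \<in> F \<and> dist (fst p) (snd p) < (1/2::real) ^ k"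
    for k p
  have "\<exists>p. \<forall>k. Q k (p k) \<and> dist (fst (p k)) (fst (p (Suc k))) < (1/2) ^ k"
  proof (rule dependent_nat_choice)
    show "\<exists>p. Q 0 p" using start unfolding Q_def by auto
    show "\<exists>p'. Q (Suc k) p' \<and> dist (fst p) (fst p') < (1/2) ^ k" if "Q k p" for p k
      using step[of "fst p" "snd p" k] that unfolding Q_def by fastforce
  qed
  then obtain p where p: "\<And>k. Q k (p k)" "\<And>k. dist (fst (p k)) (fst (p (Suc k))) < (1/2) ^ k"
    by blast
  define a where "a = fst \<circ> p"
  define x where "x = snd \<circ> p"
  have ax: "\<And>k. a k \<in> S" "\<And>k. x k \<in> F" "\<And>k. dist (a k) (x k) < (1/2) ^ k"
    using p(1) by (simp_all add: Q_def a_def x_def)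
  have a_steps: "\<And>k. dist (a k) (a (Suc k)) < (1/2) ^ k"
    using p(2) by (simp add: a_def)
  have "Cauchy a" using a_steps by (rule Cauchy_if_dist_Suc_less_half_power)
  then obtain L where aL: "a \<longlonglongrightarrow> L" using Cauchy_convergent_iff convergent_def by blast
  have "(\<lambda>k. dist (x k) L) \<longlonglongrightarrow> 0"
  proof (rule Lim_null_comparison)
    show "\<forall>\<^sub>F k in sequentially. norm (dist (x k) L) \<le> (1/2) ^ k + dist (a k) L"
    proof (intro always_eventually allI)
      fix k
      have "dist (x k) L \<le> dist (a k) (x k) + dist (a k) L" by (rule dist_triangle3)
      then show "norm (dist (x k) L) \<le> (1/2) ^ k + dist (a k) L" using ax(3)[of k] by simp
    qed
    show "(\<lambda>k. (1/2::real) ^ k + dist (a k) L) \<longlonglongrightarrow> 0"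
      using tendsto_add_zero[OF LIMSEQ_realpow_zero[of "1/2::real"]] aL tendsto_dist_iff by auto
  qed
  then have "x \<longlonglongrightarrow> L" using tendsto_dist_iff by blast
  with \<open>closed F\<close> ax(2) have "L \<in> F" by (rule closed_sequentially)
  moreover have "L \<in> closure S" unfolding closure_sequential using ax(1) aL by blast
  ultimately show ?thesis by blast
qed

lemma witness_closed_subset_card_le:
  fixes D :: "'d set" and I :: "'i set" and U :: "'a set"
    and Q :: "'i \<Rightarrow> 'a \<Rightarrow> bool" and R :: "'a \<Rightarrow> 'i \<Rightarrow> 'a \<Rightarrow> bool"
  assumes "infinite D" "|I| \<le>o |D|"
    and Q_in: "\<And>i x. Q i x \<Longrightarrow> x \<in> U" and R_in: "\<And>a i x. R a i x \<Longrightarrow> x \<in> U"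
  obtains S where "S \<subseteq> U" "|S| \<le>o |D|"
    "\<forall>i\<in>I. (\<exists>x. Q i x) \<longrightarrow> (\<exists>x\<in>S. Q i x)"
    "\<forall>a\<in>S. \<forall>i\<in>I. (\<exists>x. R a i x) \<longrightarrow> (\<exists>x\<in>S. R a i x)"
proof -
  define witnesses where
    "witnesses B = (\<lambda>(a, i). SOME x. R a i x) ` {(a, i) \<in> B \<times> I. \<exists>x. R a i x}" for B
  define T where "T n = ((\<lambda>B. B \<union> witnesses B) ^^ n)
    ((\<lambda>i. SOME x. Q i x) ` {i \<in> I. \<exists>x. Q i x})" for n
  have T_0: "T 0 = (\<lambda>i. SOME x. Q i x) ` {i \<in> I. \<exists>x. Q i x}" by (simp add: T_def)
  have T_Suc: "T (Suc n) = T n \<union> witnesses (T n)" for n by (simp add: T_def)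
  have card_D: "Card_order |D|" "infinite (Field |D| )"
    using assms(1) by (simp_all add: card_of_card_order_on Field_card_of)
  have "|T n| \<le>o |D| \<and> T n \<subseteq> U" for n
  proof (induction n)
    case 0
    have "|T 0| \<le>o |{i \<in> I. \<exists>x. Q i x}|" unfolding T_0 by (rule card_of_image)
    also have "|{i \<in> I. \<exists>x. Q i x}| \<le>o |I|" by (rule card_of_mono1) blast
    also have "|I| \<le>o |D|" by (rule assms(2))
    finally show ?case unfolding T_0 using Q_in by (auto intro: someI2_ex)
  next
    case (Suc n)
    have "|witnesses (T n)| \<le>o |T n \<times> I|"
      unfolding witnesses_def by (rule ordLeq_transitive[OF card_of_image card_of_mono1]) blast
    also have "|T n \<times> I| \<le>o |D|"
      using card_D Suc.IH assms(2) by (intro card_of_Times_ordLeq_infinite_Field) simp_all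
    finally have "|T n \<union> witnesses (T n)| \<le>o |D|"
      using card_D Suc.IH by (intro card_of_Un_ordLeq_infinite_Field) simp_all
    moreover have "witnesses (T n) \<subseteq> U"
      unfolding witnesses_def using R_in by (auto intro: someI2_ex)
    ultimately show ?case using Suc.IH by (simp add: T_Suc)
  qed
  then have T: "\<And>n. |T n| \<le>o |D|" "\<And>n. T n \<subseteq> U" by blast+
  show thesis
  proof (rule that[of "\<Union>n. T n"])
    show "(\<Union>n. T n) \<subseteq> U" using T(2) by blast
    show "|\<Union>n. T n| \<le>o |D|"
      using assms(1) T(1) infinite_iff_card_of_nat by (blast intro: card_of_UNION_ordLeq_infinite)
    show "\<forall>i\<in>I. (\<exists>x. Q i x) \<longrightarrow> (\<exists>x\<in>\<Union>n. T n. Q i x)"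
    proof (intro ballI impI)
      fix i assume "i \<in> I" "\<exists>x. Q i x"
      then have "(SOME x. Q i x) \<in> T 0" by (auto simp: T_0)
      then show "\<exists>x\<in>\<Union>n. T n. Q i x" using someI_ex[OF \<open>\<exists>x. Q i x\<close>] by blast
    qed
    show "\<forall>a\<in>\<Union>n. T n. \<forall>i\<in>I. (\<exists>x. R a i x) \<longrightarrow> (\<exists>x\<in>\<Union>n. T n. R a i x)"
    proof (intro ballI impI)
      fix a i assume "a \<in> (\<Union>n. T n)" "i \<in> I" and R: "\<exists>x. R a i x"
      then obtain n where "a \<in> T n" by blast
      then have "(SOME x. R a i x) \<in> T (Suc n)"
        using \<open>i \<in> I\<close> R by (auto simp: T_Suc witnesses_def)
      then show "\<exists>x\<in>\<Union>n. T n. R a i x" using someI_ex[OF R] by blast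
    qed
  qed
qed

lemma small_subset_with_closure_onto:
  fixes f :: "'a::complete_space \<Rightarrow> 'b::metric_space"
  assumes "continuous_on UNIV f"
    and open_map: "\<forall>U. openin (top_of_set (f -` Y)) U \<longrightarrow> openin (top_of_set Y) (f ` U)"
    and onto: "f ` (f -` Y) = Y"
    and D: "dense_subset D Y" "infinite D"
  obtains S where "S \<subseteq> f -` Y" "|S| \<le>o |D|" "Y \<subseteq> f ` (closure S \<inter> f -` Y)"
proof -
  let ?X = "f -` Y"
  define covers where
    "covers x r d m \<longleftrightarrow> x \<in> ?X \<and> ball d (1 / Suc m) \<inter> Y \<subseteq> f ` (ball x r \<inter> ?X)"
    for x r d and m :: nat
  have covered: "\<exists>d\<in>D. \<exists>m. dist d (f x) < 1 / Suc m \<and> covers x r d m"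
    if x: "x \<in> ?X" and r: "r > 0" for x r
  proof -
    obtain d m where "d \<in> D" "dist d (f x) < 1 / Suc m"
      "ball d (1 / Suc m) \<inter> Y \<subseteq> f ` (ball x r \<inter> ?X)"
      by (rule open_map_image_ball_contains_basic_ball[OF open_map D(1) x r])
    then show ?thesis using x unfolding covers_def by blast
  qed
  have lift: "\<exists>x'\<in>f -` {y}. dist x x' < r"
    if "covers x r d m" "dist d y < 1 / Suc m" "y \<in> Y" for x r d m y
    using that unfolding covers_def by force
  text \<open>An index \<open>(k, d, m)\<close> names a dyadic radius and a basic set; there are only
    \<open>|D|\<close> of them.\<close>
  define Q where "Q = (\<lambda>(k, d, m) x. covers x ((1/2) ^ k) d m)"
  define R where "R a = (\<lambda>(k, d, m) x. dist a x < (1/2) ^ k \<and> covers x ((1/2) ^ Suc k) d m)" for a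
  define I where "I = (UNIV :: nat set) \<times> D \<times> (UNIV :: nat set)"
  have "|UNIV :: nat set| \<le>o |D|" using D(2) infinite_iff_card_of_nat by blast
  then have I_card: "|I| \<le>o |D|" unfolding I_def
    using D(2) by (intro card_of_Times_ordLeq_infinite_Field)
      (simp_all add: card_of_card_order_on Field_card_of ordLeq_refl)
  have Q_in: "x \<in> ?X" if "Q i x" for i x
    using that by (auto simp: Q_def covers_def split: prod.splits)
  have R_in: "x \<in> ?X" if "R a i x" for a i x
    using that by (auto simp: R_def covers_def split: prod.splits)
  obtain S where S: "S \<subseteq> ?X" "|S| \<le>o |D|"
    and start: "\<forall>i\<in>I. (\<exists>x. Q i x) \<longrightarrow> (\<exists>x\<in>S. Q i x)"
    and step: "\<forall>a\<in>S. \<forall>i\<in>I. (\<exists>x. R a i x) \<longrightarrow> (\<exists>x\<in>S. R a i x)"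
    by (rule witness_closed_subset_card_le[where Q = Q and R = R, OF D(2) I_card Q_in R_in])
  have "Y \<subseteq> f ` (closure S \<inter> ?X)"
  proof
    fix y assume "y \<in> Y"
    have "closure S \<inter> f -` {y} \<noteq> {}"
    proof (rule closure_meets_closed_if_approximable)
      show "closed (f -` {y})"
        using assms(1) by (simp add: continuous_on_eq_continuous_at continuous_closed_vimage)
      obtain x where "x \<in> ?X" "f x = y" using onto \<open>y \<in> Y\<close> by force
      then obtain d m where "d \<in> D" "dist d y < 1 / Suc m" "covers x 1 d m"
        using covered[of x 1] by auto
      then have "(0, d, m) \<in> I" "Q (0, d, m) x" by (simp_all add: I_def Q_def)
      then obtain a where "a \<in> S" "covers a 1 d m"
        using start by (fastforce simp: Q_def)
      then show "\<exists>a\<in>S. \<exists>x\<in>f -` {y}. dist a x < 1"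
        using lift \<open>dist d y < 1 / Suc m\<close> \<open>y \<in> Y\<close> by blast
    next
      fix k a x assume "a \<in> S" "x \<in> f -` {y}" "dist a x < (1/2) ^ k"
      then obtain d m where "d \<in> D" "dist d y < 1 / Suc m" "covers x ((1/2) ^ Suc k) d m"
        using covered[of x "(1/2) ^ Suc k"] \<open>y \<in> Y\<close> by auto
      then have "(k, d, m) \<in> I" "R a (k, d, m) x"
        using \<open>dist a x < (1/2) ^ k\<close> by (simp_all add: I_def R_def)
      then obtain a' where "a' \<in> S" "dist a a' < (1/2) ^ k" "covers a' ((1/2) ^ Suc k) d m"
        using step \<open>a \<in> S\<close> by (fastforce simp: R_def)
      then show "\<exists>a'\<in>S. \<exists>x'\<in>f -` {y}. dist a' x' < (1/2) ^ Suc k \<and> dist a a' < (1/2) ^ k"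
        using lift \<open>dist d y < 1 / Suc m\<close> \<open>y \<in> Y\<close> by blast
    qed
    then show "y \<in> f ` (closure S \<inter> ?X)" using \<open>y \<in> Y\<close> by blast
  qed
  with S show thesis by (rule that)
qed

lemma finite_subset_with_closure_onto:
  fixes f :: "'a::metric_space \<Rightarrow> 'b"
  assumes "f ` (f -` Y) = Y" "finite Y"
  obtains S where "S \<subseteq> f -` Y" "|S| \<le>o |Y|" "Y \<subseteq> f ` (closure S \<inter> f -` Y)"
proof -
  let ?S = "inv_into (f -` Y) f ` Y"
  have "?S \<subseteq> f -` Y" using assms(1) by (metis image_subsetI inv_into_into)
  moreover have "|?S| \<le>o |Y|" by (rule card_of_image)
  moreover have "closure ?S = ?S" using assms(2) by (simp add: finite_imp_closed closure_closed)
  then have "Y \<subseteq> f ` (closure ?S \<inter> f -` Y)"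
    using \<open>?S \<subseteq> f -` Y\<close> assms(1) by (simp add: Int_absorb2 image_inv_into_cancel)
  ultimately show thesis by (rule that)
qed

theorem theorem2p1:
  fixes f :: "'a::complete_space \<Rightarrow> 'b::metric_space"
    and Y' :: "'b set"
  assumes "continuous_on UNIV f"
    and "\<forall>U. openin (top_of_set (f -` Y')) U \<longrightarrow> openin (top_of_set Y') (f ` U)"
    and "f ` (f -` Y') = Y'"
  shows "\<exists>X0. X0 \<subseteq> f -` Y' \<and> closedin (top_of_set (f -` Y')) X0 \<and>
           f ` X0 = Y' \<and> (dens X0, dens Y') \<in> ordIso"
proof -
  let ?X = "f -` Y'"
  obtain D where D: "dense_subset D Y'" "( |D|, dens Y') \<in> ordIso" by (rule dens_attained)
  obtain S where S: "S \<subseteq> ?X" "|S| \<le>o |D|" "Y' \<subseteq> f ` (closure S \<inter> ?X)"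
  proof (cases "finite D")
    case True
    then have "Y' = D" using D(1) by (auto simp: dense_subset_def finite_imp_closed closure_closed)
    with True obtain S where "S \<subseteq> ?X" "|S| \<le>o |D|" "Y' \<subseteq> f ` (closure S \<inter> ?X)"
      using finite_subset_with_closure_onto[OF assms(3)] by blast
    then show thesis by (rule that)
  next
    case False
    obtain S where "S \<subseteq> ?X" "|S| \<le>o |D|" "Y' \<subseteq> f ` (closure S \<inter> ?X)"
      by (rule small_subset_with_closure_onto[OF assms D(1) False])
    then show thesis by (rule that)
  qed
  define X0 where "X0 = closure S \<inter> ?X"
  have "f ` X0 = Y'" using S(3) unfolding X0_def by blast
  have "dens X0 \<le>o |S|" unfolding X0_def by (rule dens_closure_Int_le[OF S(1)])
  then have "dens X0 \<le>o dens Y'" using S(2) D(2) by (metis ordLeq_ordIso_trans ordLeq_transitive)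
  moreover have "dens Y' \<le>o dens X0"
    using dens_continuous_image_le[OF continuous_on_subset[OF assms(1)], of X0] \<open>f ` X0 = Y'\<close> by simp
  moreover have "closedin (top_of_set ?X) X0"
    unfolding X0_def by (metis Int_commute closedin_closed_Int closed_closure)
  ultimately show ?thesis
    using \<open>f ` X0 = Y'\<close> by (intro exI[of _ X0]) (simp add: ordIso_iff_ordLeq X0_def)
qed

end
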